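(* Let $N,d\ge1$, $\lambda,\tau>0$ with $\lambda\tau\le\frac12$, and let $\psi:[0,\infty)\to(0,\infty)$ be positive, nonincreasing, differentiable with $\psi(r)\le1$ for all $r\ge0$. Let $(x_i,v_i)_{i=1}^N$ solve $$\dot x_i(t)=v_i(t),\qquad \dot v_i(t)=\frac{\lambda}{N}\sum_{j=1}^N\psi(|x_i(t-\tau)-x_j(t-\tau)|)\,(v_j(t-\tau)-v_i(t-\tau)),\qquad t>0,$$ with initial data $(x_i,v_i)=(x_i^0,v_i^0)$ on $[-\tau,0]$, $(x_i^0,v_i^0)\in C([-\tau,0];\mathbb{R}^{2d})\cap C^1((-\tau,0);\mathbb{R}^{2d})$. Define for $t\ge\tau$ $$\mathcal L(t):=V(t)+4\tau\lambda^3\int_{t-\tau}^t\int_\theta^t\widetilde D(s)\,ds\,d\theta.$$ Then $\mathcal L(t)\le\mathcal L(\tau)$ for all $t\ge\tau$.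
   Context: $V(t):=\frac12\sum_{i,j=1}^N|v_i(t)-v_j(t)|^2$, $D(t):=\frac12\sum_{i,j=1}^N\psi(|x_i(t)-x_j(t)|)\,|v_j(t)-v_i(t)|^2$, and $\widetilde D(t):=D(t-\tau)$. *)

theory Defs
  imports "HOL-Analysis.Analysis"
begin

definition Vfun :: "nat \<Rightarrow> (nat \<Rightarrow> real \<Rightarrow> real^'d) \<Rightarrow> real \<Rightarrow> real" where
  "Vfun N v t = (1/2) * (\<Sum>i<N. \<Sum>j<N. (norm (v i t - v j t))\<^sup>2)"

definition Dfun :: "nat \<Rightarrow> (real \<Rightarrow> real) \<Rightarrow> (nat \<Rightarrow> real \<Rightarrow> real^'d)
    \<Rightarrow> (nat \<Rightarrow> real \<Rightarrow> real^'d) \<Rightarrow> real \<Rightarrow> real" where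
  "Dfun N \<psi> x v t = (1/2) * (\<Sum>i<N. \<Sum>j<N. \<psi> (norm (x i t - x j t)) * (norm (v j t - v i t))\<^sup>2)"

definition Dtilde :: "nat \<Rightarrow> real \<Rightarrow> (real \<Rightarrow> real) \<Rightarrow> (nat \<Rightarrow> real \<Rightarrow> real^'d)
    \<Rightarrow> (nat \<Rightarrow> real \<Rightarrow> real^'d) \<Rightarrow> real \<Rightarrow> real" where
  "Dtilde N \<tau> \<psi> x v t = Dfun N \<psi> x v (t - \<tau>)"

definition Lfun :: "nat \<Rightarrow> real \<Rightarrow> real \<Rightarrow> (real \<Rightarrow> real) \<Rightarrow> (nat \<Rightarrow> real \<Rightarrow> real^'d)
    \<Rightarrow> (nat \<Rightarrow> real \<Rightarrow> real^'d) \<Rightarrow> real \<Rightarrow> real" where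
  "Lfun N lam \<tau> \<psi> x v t = Vfun N v t + 4 * \<tau> * lam ^ 3 *
     integral {t - \<tau>..t} (\<lambda>\<theta>. integral {\<theta>..t} (\<lambda>s. Dtilde N \<tau> \<psi> x v s))"

end

theory Submission
  imports Defs
begin

(*
  Along the delayed dynamics
    V'(t) = 2 lam * sum_ij psi_ij(t - tau) <v_i(t), v_j(t - tau) - v_i(t - tau)>.
  Writing v_i(t) = v_i(t - tau) + (v_i(t) - v_i(t - tau)), the first part contributes
  -2 lam D~(t) by the symmetry of the weights, and Young's inequality trades half of it
  for the increments:  V' <= - lam D~(t) + 2 lam N sum_i |v_i(t) - v_i(t - tau)|^2.
  By Cauchy-Schwarz in time and psi <= 1 the increments are at most
  (2 tau lam^2 / N) * int_{t-tau}^t D~, so  V' <= - lam D~(t) + 4 tau lam^3 int_{t-tau}^t D~.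
  The double integral in L has derivative  tau D~(t) - int_{t-tau}^t D~, which cancels the
  integral term and leaves  L' <= lam (4 lam^2 tau^2 - 1) D~(t) <= 0  since lam tau <= 1/2.
*)

lemma norm_weighted_sum_power2_le:
  fixes y :: "'i \<Rightarrow> 'a::real_normed_vector"
  assumes "finite A" and "\<And>k. k \<in> A \<Longrightarrow> 0 \<le> a k \<and> a k \<le> 1"
  shows "norm (\<Sum>k\<in>A. a k *\<^sub>R y k) ^ 2 \<le> card A * (\<Sum>k\<in>A. a k * norm (y k) ^ 2)"
proof -
  have "norm (\<Sum>k\<in>A. a k *\<^sub>R y k) \<le> (\<Sum>k\<in>A. a k * norm (y k))"
    by (rule order_trans[OF norm_sum]) (simp add: assms(2) sum_mono)
  then have "norm (\<Sum>k\<in>A. a k *\<^sub>R y k) ^ 2 \<le> (\<Sum>k\<in>A. 1 * (a k * norm (y k))) ^ 2"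
    by (simp add: power_mono)
  also have "\<dots> \<le> card A * (\<Sum>k\<in>A. (a k * norm (y k)) ^ 2)"
    using Cauchy_Schwarz_ineq_sum[of "\<lambda>_. 1" "\<lambda>k. a k * norm (y k)" A] by simp
  also have "\<dots> \<le> card A * (\<Sum>k\<in>A. a k * norm (y k) ^ 2)"
  proof (intro mult_left_mono sum_mono)
    fix k assume "k \<in> A"
    then have "a k ^ 2 \<le> a k"
      using assms(2) by (simp add: power2_eq_square mult_left_le)
    then show "(a k * norm (y k)) ^ 2 \<le> a k * norm (y k) ^ 2"
      by (simp add: power_mult_distrib mult_right_mono)
  qed simp
  finally show ?thesis .
qed

lemma sum_sum_inner_diff_diff:
  fixes w f :: "'i \<Rightarrow> 'a::real_inner"
  assumes "finite A"
  shows "(\<Sum>i\<in>A. \<Sum>j\<in>A. inner (w i - w j) (f i - f j))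
    = 2 * card A * (\<Sum>i\<in>A. inner (w i) (f i)) - 2 * inner (\<Sum>i\<in>A. w i) (\<Sum>i\<in>A. f i)"
proof -
  have cross: "(\<Sum>i\<in>A. \<Sum>j\<in>A. inner (w i) (f j)) = inner (\<Sum>i\<in>A. w i) (\<Sum>i\<in>A. f i)"
    by (simp add: inner_sum_left inner_sum_right sum.swap[of "\<lambda>i j. inner (w i) (f j)"])
  have "inner (w i - w j) (f i - f j)
      = inner (w i) (f i) + inner (w j) (f j) - inner (w i) (f j) - inner (w j) (f i)" for i j
    by (simp add: inner_diff_left inner_diff_right)
  then show ?thesis
    by (simp add: sum_subtractf sum.distrib cross sum.swap[of "\<lambda>i j. inner (w j) (f i)"]
        sum_distrib_left mult.assoc)
qed

lemma sum_sum_symmetric_weighted_diff: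
  fixes p :: "'i \<Rightarrow> 'a::real_vector"
  assumes "\<And>i k. a i k = a k i"
  shows "(\<Sum>i\<in>A. \<Sum>k\<in>A. a i k *\<^sub>R (p k - p i)) = 0"
proof -
  have "(\<Sum>i\<in>A. \<Sum>k\<in>A. a i k *\<^sub>R p k) = (\<Sum>i\<in>A. \<Sum>k\<in>A. a i k *\<^sub>R p i)"
    by (subst sum.swap) (simp add: assms)
  then show ?thesis by (simp add: scaleR_diff_right sum_subtractf)
qed

lemma sum_sum_symmetric_weighted_inner_diff:
  fixes p :: "'i \<Rightarrow> 'a::real_inner"
  assumes "\<And>i k. a i k = a k i"
  shows "(\<Sum>i\<in>A. \<Sum>k\<in>A. a i k * inner (p i) (p k - p i))
    = - (1/2) * (\<Sum>i\<in>A. \<Sum>k\<in>A. a i k * norm (p k - p i) ^ 2)"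
proof -
  have swap: "(\<Sum>i\<in>A. \<Sum>k\<in>A. a i k * inner (p i) (p k - p i))
      = (\<Sum>i\<in>A. \<Sum>k\<in>A. a i k * inner (p k) (p i - p k))"
    by (subst sum.swap) (simp add: assms)
  have "a i k * inner (p i) (p k - p i) + a i k * inner (p k) (p i - p k) = - (a i k * norm (p k - p i) ^ 2)" for i k
    by (simp add: power2_norm_eq_inner inner_diff_left inner_diff_right inner_commute algebra_simps)
  then have "2 * (\<Sum>i\<in>A. \<Sum>k\<in>A. a i k * inner (p i) (p k - p i))
      = - (\<Sum>i\<in>A. \<Sum>k\<in>A. a i k * norm (p k - p i) ^ 2)"
    by (subst mult_2, subst (2) swap) (simp add: sum.distrib[symmetric] sum_negf)
  then show ?thesis by simp
qed

lemma inner_le_quarter_norm_power2_add: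
  fixes e y :: "'a::real_inner"
  shows "inner e y \<le> (1/4) * norm y ^ 2 + norm e ^ 2"
proof -
  have "0 \<le> norm (2 *\<^sub>R e - y) ^ 2" by simp
  then show ?thesis
    by (simp add: power2_norm_eq_inner inner_diff_left inner_diff_right inner_commute algebra_simps)
qed

lemma sum_sum_symmetric_weighted_inner_diff_le:
  fixes w p :: "'i \<Rightarrow> 'a::real_inner"
  assumes "finite A" and sym: "\<And>i k. a i k = a k i"
    and a01: "\<And>i k. i \<in> A \<Longrightarrow> k \<in> A \<Longrightarrow> 0 \<le> a i k \<and> a i k \<le> 1"
  shows "(\<Sum>i\<in>A. \<Sum>k\<in>A. a i k * inner (w i) (p k - p i))
    \<le> - (1/4) * (\<Sum>i\<in>A. \<Sum>k\<in>A. a i k * norm (p k - p i) ^ 2)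
      + card A * (\<Sum>i\<in>A. norm (w i - p i) ^ 2)"
proof -
  have split: "a i k * inner (w i) (p k - p i)
      = a i k * inner (p i) (p k - p i) + a i k * inner (w i - p i) (p k - p i)" for i k
    by (simp add: inner_diff_left algebra_simps)
  have "a i k * inner (w i - p i) (p k - p i) \<le> (1/4) * (a i k * norm (p k - p i) ^ 2) + norm (w i - p i) ^ 2"
    if "i \<in> A" "k \<in> A" for i k
  proof -
    have "a i k * inner (w i - p i) (p k - p i) \<le> a i k * ((1/4) * norm (p k - p i) ^ 2 + norm (w i - p i) ^ 2)"
      using a01[OF that] by (intro mult_left_mono inner_le_quarter_norm_power2_add) auto
    also have "\<dots> \<le> (1/4) * (a i k * norm (p k - p i) ^ 2) + norm (w i - p i) ^ 2"
      using a01[OF that] by (simp add: algebra_simps mult_left_le_one_le)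
    finally show ?thesis .
  qed
  then have "(\<Sum>i\<in>A. \<Sum>k\<in>A. a i k * inner (w i - p i) (p k - p i))
      \<le> (\<Sum>i\<in>A. \<Sum>k\<in>A. (1/4) * (a i k * norm (p k - p i) ^ 2) + norm (w i - p i) ^ 2)"
    by (intro sum_mono) auto
  also have "\<dots> = (1/4) * (\<Sum>i\<in>A. \<Sum>k\<in>A. a i k * norm (p k - p i) ^ 2)
      + card A * (\<Sum>i\<in>A. norm (w i - p i) ^ 2)"
    by (simp add: sum.distrib sum_distrib_left)
  finally show ?thesis
    unfolding split sum.distrib sum_sum_symmetric_weighted_inner_diff[OF sym] by simp
qed

lemma has_real_derivative_norm_power2:
  fixes g :: "real \<Rightarrow> 'a::real_inner"
  assumes "(g has_vector_derivative g') (at u)"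
  shows "((\<lambda>u. norm (g u) ^ 2) has_real_derivative 2 * inner (g u) g') (at u)"
proof -
  note g = assms[unfolded has_vector_derivative_def]
  have "((\<lambda>u. inner (g u) (g u))
      has_derivative (\<lambda>h. inner (g u) (h *\<^sub>R g') + inner (h *\<^sub>R g') (g u))) (at u)"
    using has_derivative_inner[OF g g] .
  then have "((\<lambda>u. inner (g u) (g u)) has_derivative (\<lambda>h. (2 * inner (g u) g') * h)) (at u)"
    by (rule has_derivative_eq_rhs) (auto simp: inner_commute algebra_simps)
  then show ?thesis by (simp add: has_field_derivative_def power2_norm_eq_inner)
qed

lemma has_integral_norm_power2_le:
  fixes F :: "real \<Rightarrow> 'a::euclidean_space"
  assumes "a < b" and F: "(F has_integral A) {a..b}"
    and F2: "(\<lambda>s. norm (F s)^2) integrable_on {a..b}"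
  shows "norm A ^ 2 \<le> (b - a) * integral {a..b} (\<lambda>s. norm (F s)^2)"
proof -
  \<comment> \<open>integrate 0 \<le> |F s - c|^2, where c is the mean value of F\<close>
  define c where "c = (1 / (b - a)) *\<^sub>R A"
  have "((\<lambda>s. inner c (F s)) has_integral inner c A) {a..b}"
    using has_integral_linear[OF F bounded_linear_inner_right] by (simp add: o_def)
  then have "((\<lambda>s. 2 * inner c (F s) - norm c ^ 2) has_integral (2 * inner c A - norm c ^ 2 * (b - a))) {a..b}"
    using has_integral_diff[OF has_integral_mult_right has_integral_const_real[of "norm c ^ 2" a b]] \<open>a < b\<close>
    by (simp add: mult.commute)
  moreover have "2 * inner c (F s) - norm c ^ 2 \<le> norm (F s) ^ 2" for s
  proof -
    have "0 \<le> norm (F s - c) ^ 2" by simp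
    then show ?thesis by (simp add: power2_norm_eq_inner inner_diff inner_commute)
  qed
  ultimately have "2 * inner c A - norm c ^ 2 * (b - a) \<le> integral {a..b} (\<lambda>s. norm (F s)^2)"
    using has_integral_le[OF _ integrable_integral[OF F2]] by blast
  moreover have "2 * inner c A - norm c ^ 2 * (b - a) = norm A ^ 2 / (b - a)"
  proof -
    have "inner c A = norm A ^ 2 / (b - a)" and "norm c ^ 2 = norm A ^ 2 / (b - a) ^ 2"
      using \<open>a < b\<close> by (simp_all add: c_def power2_norm_eq_inner power_divide)
    then show ?thesis
      using \<open>a < b\<close> by (simp add: power2_eq_square)
  qed
  ultimately show ?thesis
    using \<open>a < b\<close> by (simp add: pos_divide_le_eq mult.commute)
qed

lemma continuous_on_delay:
  fixes f :: "real \<Rightarrow> 'a::topological_space"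
  assumes "continuous_on {-\<tau>..} f"
  shows "continuous_on {0..} (\<lambda>s. f (s - \<tau>))"
  by (rule continuous_on_compose2[OF assms]) (auto intro!: continuous_intros)

lemma integral_Icc_eq_diff_primitive:
  fixes f :: "real \<Rightarrow> real"
  assumes "continuous_on {a..b} f" and "a \<le> c" "c \<le> d" "d \<le> b"
  shows "integral {c..d} f = integral {a..d} f - integral {a..c} f"
proof -
  have "f integrable_on {a..d}"
    using assms by (intro integrable_continuous_interval) (auto elim: continuous_on_subset)
  then show ?thesis
    using Henstock_Kurzweil_Integration.integral_combine[where a=a and c=c and b=d and f=f] assms by simp
qed

lemma delay_double_integral_eq_primitives:
  fixes f :: "real \<Rightarrow> real"
  assumes f: "continuous_on {a..b} f" and "0 \<le> \<tau>" "a \<le> u - \<tau>" "u \<le> b"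
  shows "integral {u - \<tau>..u} (\<lambda>\<theta>. integral {\<theta>..u} f)
    = \<tau> * integral {a..u} f
      - (integral {a..u} (\<lambda>s. integral {a..s} f) - integral {a..u - \<tau>} (\<lambda>s. integral {a..s} f))"
proof -
  have E_cont: "continuous_on {a..b} (\<lambda>s. integral {a..s} f)"
    using f by (intro indefinite_integral_continuous_1 integrable_continuous_interval)
  then have "(\<lambda>s. integral {a..s} f) integrable_on {u - \<tau>..u}"
    using assms by (intro integrable_continuous_interval) (auto elim: continuous_on_subset)
  moreover have "integral {u - \<tau>..u} (\<lambda>\<theta>. integral {\<theta>..u} f)
      = integral {u - \<tau>..u} (\<lambda>\<theta>. integral {a..u} f - integral {a..\<theta>} f)"
    using assms by (intro integral_cong integral_Icc_eq_diff_primitive[OF f]) auto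
  ultimately have "integral {u - \<tau>..u} (\<lambda>\<theta>. integral {\<theta>..u} f)
      = \<tau> * integral {a..u} f - integral {u - \<tau>..u} (\<lambda>s. integral {a..s} f)"
    using \<open>0 \<le> \<tau>\<close> by (simp add: integral_diff[OF integrable_const_ivl])
  also have "integral {u - \<tau>..u} (\<lambda>s. integral {a..s} f)
      = integral {a..u} (\<lambda>s. integral {a..s} f) - integral {a..u - \<tau>} (\<lambda>s. integral {a..s} f)"
    using assms by (intro integral_Icc_eq_diff_primitive[OF E_cont]) auto
  finally show ?thesis .
qed

lemma has_real_derivative_delay_double_integral:
  fixes f :: "real \<Rightarrow> real"
  assumes f: "continuous_on {a..b} f" and "0 \<le> \<tau>" "a < u - \<tau>" "u < b"
  shows "((\<lambda>u. integral {u - \<tau>..u} (\<lambda>\<theta>. integral {\<theta>..u} f))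
    has_real_derivative \<tau> * f u - integral {u - \<tau>..u} f) (at u)"
proof -
  define E where "E = (\<lambda>u. integral {a..u} f)"
  define P where "P = (\<lambda>u. integral {a..u} E)"
  have E_cont: "continuous_on {a..b} E"
    unfolding E_def using f by (intro indefinite_integral_continuous_1 integrable_continuous_interval)
  have dE: "(E has_real_derivative f y) (at y)" and dP: "(P has_real_derivative E y) (at y)"
    if "a < y" "y < b" for y
    using integral_has_real_derivative[OF f, of y] integral_has_real_derivative[OF E_cont, of y]
      at_within_Icc_at[OF that] that
    by (simp_all add: E_def P_def)
  have "((\<lambda>u. P (u - \<tau>)) has_real_derivative E (u - \<tau>)) (at u)"
    using DERIV_shift[of P "E (u - \<tau>)" u "- \<tau>"] dP[of "u - \<tau>"] assms by simp
  then have "((\<lambda>u. \<tau> * E u - (P u - P (u - \<tau>)))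
      has_real_derivative \<tau> * f u - (E u - E (u - \<tau>))) (at u)"
    using assms by (intro DERIV_diff DERIV_cmult dE dP) auto
  moreover have "E u - E (u - \<tau>) = integral {u - \<tau>..u} f"
    unfolding E_def using assms by (intro integral_Icc_eq_diff_primitive[OF f, symmetric]) auto
  ultimately have "((\<lambda>u. \<tau> * E u - (P u - P (u - \<tau>)))
      has_real_derivative \<tau> * f u - integral {u - \<tau>..u} f) (at u)"
    by simp
  then show ?thesis
  proof (rule has_field_derivative_transform_within_open[OF _ open_greaterThanLessThan])
    show "u \<in> {a + \<tau><..<b}"
      using assms by simp
    fix y assume "y \<in> {a + \<tau><..<b}"
    then show "\<tau> * E y - (P y - P (y - \<tau>)) = integral {y - \<tau>..y} (\<lambda>\<theta>. integral {\<theta>..y} f)"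
      unfolding E_def P_def using assms by (simp add: delay_double_integral_eq_primitives[OF f])
  qed
qed

lemma continuous_on_delay_double_integral:
  fixes f :: "real \<Rightarrow> real"
  assumes f: "continuous_on {a..b} f" and "0 \<le> \<tau>"
  shows "continuous_on {a + \<tau>..b} (\<lambda>u. integral {u - \<tau>..u} (\<lambda>\<theta>. integral {\<theta>..u} f))"
proof -
  define E where "E = (\<lambda>u. integral {a..u} f)"
  define P where "P = (\<lambda>u. integral {a..u} E)"
  have E_cont: "continuous_on {a..b} E"
    unfolding E_def using f by (intro indefinite_integral_continuous_1 integrable_continuous_interval)
  have P_cont: "continuous_on {a..b} P"
    unfolding P_def using E_cont by (intro indefinite_integral_continuous_1 integrable_continuous_interval)
  have "continuous_on {a + \<tau>..b} (\<lambda>u. P (u - \<tau>))"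
    by (rule continuous_on_compose2[OF P_cont]) (use assms(2) in \<open>auto intro!: continuous_intros\<close>)
  then have "continuous_on {a + \<tau>..b} (\<lambda>u. \<tau> * E u - (P u - P (u - \<tau>)))"
    using assms(2)
    by (intro continuous_intros continuous_on_subset[OF E_cont] continuous_on_subset[OF P_cont]) auto
  then show ?thesis
  proof (rule continuous_on_eq)
    fix y assume "y \<in> {a + \<tau>..b}"
    then show "\<tau> * E y - (P y - P (y - \<tau>)) = integral {y - \<tau>..y} (\<lambda>\<theta>. integral {\<theta>..y} f)"
      unfolding E_def P_def using assms by (simp add: delay_double_integral_eq_primitives[OF f])
  qed
qed

lemma delay_lyapunov_functional_decreasing:
  fixes V D :: "real \<Rightarrow> real"
  assumes "0 \<le> \<tau>" "s \<le> t" "c * \<tau> \<le> \<kappa>"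
    and D: "continuous_on {s - \<tau>..t} D" and D_nonneg: "\<And>u. s < u \<Longrightarrow> u < t \<Longrightarrow> 0 \<le> D u"
    and V: "continuous_on {s..t} V"
    and V': "\<And>u. s < u \<Longrightarrow> u < t \<Longrightarrow>
      \<exists>V'. (V has_real_derivative V') (at u) \<and> V' \<le> c * integral {u - \<tau>..u} D - \<kappa> * D u"
  shows "V t + c * integral {t - \<tau>..t} (\<lambda>\<theta>. integral {\<theta>..t} D)
    \<le> V s + c * integral {s - \<tau>..s} (\<lambda>\<theta>. integral {\<theta>..s} D)"
proof (rule DERIV_nonpos_imp_decreasing_open[OF \<open>s \<le> t\<close>])
  fix u assume u: "s < u" "u < t"
  obtain V' where dV: "(V has_real_derivative V') (at u)"
    and V'_le: "V' \<le> c * integral {u - \<tau>..u} D - \<kappa> * D u"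
    using V'[OF u] by blast
  have "((\<lambda>u. V u + c * integral {u - \<tau>..u} (\<lambda>\<theta>. integral {\<theta>..u} D))
      has_real_derivative V' + c * (\<tau> * D u - integral {u - \<tau>..u} D)) (at u)"
    using u assms(1) by (intro DERIV_add dV DERIV_cmult has_real_derivative_delay_double_integral[OF D]) auto
  moreover have "V' + c * (\<tau> * D u - integral {u - \<tau>..u} D) \<le> 0"
    using V'_le mult_right_mono[OF assms(3) D_nonneg[OF u]] by (simp add: algebra_simps)
  ultimately show "\<exists>y. ((\<lambda>u. V u + c * integral {u - \<tau>..u} (\<lambda>\<theta>. integral {\<theta>..u} D))
      has_real_derivative y) (at u) \<and> y \<le> 0"
    by blast
next
  show "continuous_on {s..t} (\<lambda>u. V u + c * integral {u - \<tau>..u} (\<lambda>\<theta>. integral {\<theta>..u} D))"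
    using continuous_on_delay_double_integral[OF D assms(1)]
    by (intro continuous_intros V) simp
qed

locale delayed_cucker_smale =
  fixes N :: nat and lam \<tau> :: real and \<psi> :: "real \<Rightarrow> real"
    and x v :: "nat \<Rightarrow> real \<Rightarrow> real^'d"
  assumes N_pos: "N \<ge> 1" and lam_pos: "lam > 0" and tau_pos: "\<tau> > 0"
    and psi_cont: "continuous_on {0..} \<psi>"
    and psi_range: "\<And>r. r \<ge> 0 \<Longrightarrow> 0 \<le> \<psi> r \<and> \<psi> r \<le> 1"
    and x_cont: "\<And>i. i < N \<Longrightarrow> continuous_on {-\<tau>..} (x i)"
    and v_cont: "\<And>i. i < N \<Longrightarrow> continuous_on {-\<tau>..} (v i)"
    and ode_v: "\<And>i t. i < N \<Longrightarrow> t > 0 \<Longrightarrow>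
       (v i has_vector_derivative
          (lam / real N) *\<^sub>R (\<Sum>j<N. \<psi> (norm (x i (t - \<tau>) - x j (t - \<tau>)))
                                  *\<^sub>R (v j (t - \<tau>) - v i (t - \<tau>)))) (at t)"
begin

definition weight :: "real \<Rightarrow> nat \<Rightarrow> nat \<Rightarrow> real" where
  "weight s i j = \<psi> (norm (x i (s - \<tau>) - x j (s - \<tau>)))"

definition force :: "nat \<Rightarrow> real \<Rightarrow> real^'d" where
  "force i s = (lam / real N) *\<^sub>R (\<Sum>j<N. weight s i j *\<^sub>R (v j (s - \<tau>) - v i (s - \<tau>)))"

lemma weight_sym: "weight s i j = weight s j i"
  unfolding weight_def by (simp add: norm_minus_commute)

lemma weight_range: "0 \<le> weight s i j \<and> weight s i j \<le> 1"
  unfolding weight_def by (simp add: psi_range)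

lemma continuous_on_weight:
  assumes "i < N" "j < N"
  shows "continuous_on {0..} (\<lambda>s. weight s i j)"
  unfolding weight_def
  by (rule continuous_on_compose2[OF psi_cont])
    (auto intro!: continuous_intros continuous_on_delay x_cont assms)

lemma Dtilde_eq:
  "Dtilde N \<tau> \<psi> x v s = (1/2) * (\<Sum>i<N. \<Sum>j<N. weight s i j * norm (v j (s - \<tau>) - v i (s - \<tau>)) ^ 2)"
  unfolding Dtilde_def Dfun_def weight_def ..

lemma Dtilde_nonneg: "0 \<le> Dtilde N \<tau> \<psi> x v s"
  unfolding Dtilde_eq using weight_range by (intro mult_nonneg_nonneg sum_nonneg) auto

lemma continuous_on_Dtilde: "continuous_on {0..} (Dtilde N \<tau> \<psi> x v)"
  unfolding Dtilde_eq
  by (intro continuous_intros continuous_on_weight continuous_on_delay v_cont) auto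

lemma continuous_on_force:
  assumes "i < N"
  shows "continuous_on {0..} (force i)"
  unfolding force_def using assms
  by (intro continuous_intros continuous_on_weight continuous_on_delay v_cont) auto

lemma continuous_on_Vfun: "continuous_on {-\<tau>..} (Vfun N v)"
  unfolding Vfun_def by (intro continuous_intros v_cont) auto

lemma has_vector_derivative_v:
  assumes "i < N" "0 < s"
  shows "(v i has_vector_derivative force i s) (at s)"
  using ode_v[OF assms] by (simp add: force_def weight_def)

lemma sum_force_eq_0: "(\<Sum>i<N. force i s) = 0"
  using sum_sum_symmetric_weighted_diff[of "weight s" "\<lambda>k. v k (s - \<tau>)" "{..<N}"] weight_sym
  by (simp add: force_def scaleR_sum_right[symmetric])

lemma has_real_derivative_Vfun:
  assumes "0 < u"
  shows "(Vfun N v has_real_derivative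
      2 * lam * (\<Sum>i<N. \<Sum>j<N. weight u i j * inner (v i u) (v j (u - \<tau>) - v i (u - \<tau>)))) (at u)"
proof -
  have "(Vfun N v has_real_derivative
      (1/2) * (\<Sum>i<N. \<Sum>j<N. 2 * inner (v i u - v j u) (force i u - force j u))) (at u)"
    unfolding Vfun_def using assms
    by (intro DERIV_cmult DERIV_sum has_real_derivative_norm_power2 has_vector_derivative_diff
        has_vector_derivative_v) auto
  moreover have "(1/2) * (\<Sum>i<N. \<Sum>j<N. 2 * inner (v i u - v j u) (force i u - force j u))
      = 2 * N * (\<Sum>i<N. inner (v i u) (force i u))"
    by (simp add: sum_distrib_left[symmetric] sum_sum_inner_diff_diff sum_force_eq_0)
  also have "\<dots> = 2 * lam * (\<Sum>i<N. \<Sum>j<N. weight u i j * inner (v i u) (v j (u - \<tau>) - v i (u - \<tau>)))"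
    using N_pos by (simp add: force_def inner_sum_right sum_distrib_left mult.assoc)
  ultimately show ?thesis by (rule DERIV_cong)
qed

lemma sum_norm_force_power2_le:
  "(\<Sum>i<N. norm (force i s) ^ 2) \<le> (2 * lam ^ 2 / N) * Dtilde N \<tau> \<psi> x v s"
proof -
  have "norm (force i s) ^ 2
      \<le> (lam ^ 2 / N) * (\<Sum>j<N. weight s i j * norm (v j (s - \<tau>) - v i (s - \<tau>)) ^ 2)" for i
  proof -
    have "norm (\<Sum>j<N. weight s i j *\<^sub>R (v j (s - \<tau>) - v i (s - \<tau>))) ^ 2
        \<le> N * (\<Sum>j<N. weight s i j * norm (v j (s - \<tau>) - v i (s - \<tau>)) ^ 2)"
      using norm_weighted_sum_power2_le[of "{..<N}" "weight s i"] weight_range by simp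
    then have "norm (force i s) ^ 2
        \<le> (lam / N) ^ 2 * (N * (\<Sum>j<N. weight s i j * norm (v j (s - \<tau>) - v i (s - \<tau>)) ^ 2))"
      unfolding force_def norm_scaleR power_mult_distrib power2_abs by (rule mult_left_mono) simp
    then show ?thesis
      using N_pos by (simp add: power2_eq_square)
  qed
  then have "(\<Sum>i<N. norm (force i s) ^ 2)
      \<le> (\<Sum>i<N. (lam ^ 2 / N) * (\<Sum>j<N. weight s i j * norm (v j (s - \<tau>) - v i (s - \<tau>)) ^ 2))"
    by (rule sum_mono)
  also have "\<dots> = (lam ^ 2 / N) * (\<Sum>i<N. \<Sum>j<N. weight s i j * norm (v j (s - \<tau>) - v i (s - \<tau>)) ^ 2)"
    by (simp add: sum_distrib_left)
  also have "\<dots> = (2 * lam ^ 2 / N) * Dtilde N \<tau> \<psi> x v s"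
    by (simp add: Dtilde_eq)
  finally show ?thesis .
qed

lemma sum_velocity_increment_le:
  assumes "\<tau> < u"
  shows "(\<Sum>i<N. norm (v i u - v i (u - \<tau>)) ^ 2)
    \<le> (2 * \<tau> * lam ^ 2 / N) * integral {u - \<tau>..u} (Dtilde N \<tau> \<psi> x v)"
proof -
  have force_sq_int: "(\<lambda>s. norm (force i s) ^ 2) integrable_on {u - \<tau>..u}" if "i < N" for i
    using continuous_on_force[OF that] assms
    by (intro integrable_continuous_interval continuous_intros) (auto elim: continuous_on_subset)
  have "(force i has_integral (v i u - v i (u - \<tau>))) {u - \<tau>..u}" if "i < N" for i
    using assms tau_pos has_vector_derivative_v[OF that]
    by (intro fundamental_theorem_of_calculus) (auto intro: has_vector_derivative_at_within)
  then have increment: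
      "norm (v i u - v i (u - \<tau>)) ^ 2 \<le> \<tau> * integral {u - \<tau>..u} (\<lambda>s. norm (force i s) ^ 2)"
    if "i < N" for i
    using has_integral_norm_power2_le[of "u - \<tau>" u, OF _ _ force_sq_int[OF that]] that tau_pos by simp
  have "(\<Sum>i<N. norm (v i u - v i (u - \<tau>)) ^ 2)
      \<le> (\<Sum>i<N. \<tau> * integral {u - \<tau>..u} (\<lambda>s. norm (force i s) ^ 2))"
    by (intro sum_mono increment) simp
  also have "\<dots> = \<tau> * integral {u - \<tau>..u} (\<lambda>s. \<Sum>i<N. norm (force i s) ^ 2)"
    using force_sq_int
    by (subst Henstock_Kurzweil_Integration.integral_sum) (auto simp: sum_distrib_left)
  also have "\<dots> \<le> \<tau> * integral {u - \<tau>..u} (\<lambda>s. (2 * lam ^ 2 / N) * Dtilde N \<tau> \<psi> x v s)"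
  proof (rule mult_left_mono[OF integral_le])
    show "(\<lambda>s. \<Sum>i<N. norm (force i s) ^ 2) integrable_on {u - \<tau>..u}"
      using force_sq_int by (intro integrable_sum) auto
    show "(\<lambda>s. (2 * lam ^ 2 / N) * Dtilde N \<tau> \<psi> x v s) integrable_on {u - \<tau>..u}"
      using assms
      by (intro integrable_on_mult_right integrable_continuous_interval
          continuous_on_subset[OF continuous_on_Dtilde]) auto
  qed (use sum_norm_force_power2_le tau_pos in auto)
  finally show ?thesis by (simp add: mult.assoc mult.left_commute)
qed

lemma has_real_derivative_Vfun_le:
  assumes "\<tau> < u"
  shows "\<exists>V'. (Vfun N v has_real_derivative V') (at u)
    \<and> V' \<le> 4 * \<tau> * lam ^ 3 * integral {u - \<tau>..u} (Dtilde N \<tau> \<psi> x v) - lam * Dtilde N \<tau> \<psi> x v u"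
proof (intro exI conjI)
  show "(Vfun N v has_real_derivative
      2 * lam * (\<Sum>i<N. \<Sum>j<N. weight u i j * inner (v i u) (v j (u - \<tau>) - v i (u - \<tau>)))) (at u)"
    using assms tau_pos by (intro has_real_derivative_Vfun) simp
  have "(\<Sum>i<N. \<Sum>j<N. weight u i j * inner (v i u) (v j (u - \<tau>) - v i (u - \<tau>)))
      \<le> - (1/2) * Dtilde N \<tau> \<psi> x v u + N * (\<Sum>i<N. norm (v i u - v i (u - \<tau>)) ^ 2)"
    using sum_sum_symmetric_weighted_inner_diff_le[of "{..<N}" "weight u" "\<lambda>i. v i u" "\<lambda>i. v i (u - \<tau>)"]
      weight_sym weight_range
    by (simp add: Dtilde_eq)
  also have "\<dots> \<le> - (1/2) * Dtilde N \<tau> \<psi> x v u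
      + 2 * \<tau> * lam ^ 2 * integral {u - \<tau>..u} (Dtilde N \<tau> \<psi> x v)"
    using mult_left_mono[OF sum_velocity_increment_le[OF assms], of N] N_pos by simp
  finally have "2 * lam * (\<Sum>i<N. \<Sum>j<N. weight u i j * inner (v i u) (v j (u - \<tau>) - v i (u - \<tau>)))
      \<le> 2 * lam * (- (1/2) * Dtilde N \<tau> \<psi> x v u
        + 2 * \<tau> * lam ^ 2 * integral {u - \<tau>..u} (Dtilde N \<tau> \<psi> x v))"
    using lam_pos by (intro mult_left_mono) auto
  then show "2 * lam * (\<Sum>i<N. \<Sum>j<N. weight u i j * inner (v i u) (v j (u - \<tau>) - v i (u - \<tau>)))
      \<le> 4 * \<tau> * lam ^ 3 * integral {u - \<tau>..u} (Dtilde N \<tau> \<psi> x v) - lam * Dtilde N \<tau> \<psi> x v u"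
    by (simp add: power3_eq_cube power2_eq_square algebra_simps)
qed

lemma Lfun_decreasing:
  assumes "lam * \<tau> \<le> 1/2" and "\<tau> \<le> t"
  shows "Lfun N lam \<tau> \<psi> x v t \<le> Lfun N lam \<tau> \<psi> x v \<tau>"
proof -
  have "(4 * \<tau> * lam ^ 3) * \<tau> \<le> lam"
  proof -
    have "(lam * \<tau>) ^ 2 \<le> (1/2) ^ 2"
      using assms(1) lam_pos tau_pos by (intro power_mono) auto
    then show ?thesis
      using lam_pos mult_left_mono[of "4 * (lam * \<tau>) ^ 2" 1 lam]
      by (simp add: power2_eq_square power3_eq_cube algebra_simps)
  qed
  moreover have "continuous_on {\<tau> - \<tau>..t} (Dtilde N \<tau> \<psi> x v)"
    using continuous_on_Dtilde by (rule continuous_on_subset) auto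
  moreover have "continuous_on {\<tau>..t} (Vfun N v)"
    using tau_pos by (intro continuous_on_subset[OF continuous_on_Vfun]) auto
  ultimately show ?thesis
    unfolding Lfun_def
    by (intro delay_lyapunov_functional_decreasing[where \<kappa>=lam] Dtilde_nonneg has_real_derivative_Vfun_le)
      (use tau_pos assms(2) in auto)
qed

end

theorem lemma3p2:
  fixes N :: nat and lam \<tau> :: real and \<psi> :: "real \<Rightarrow> real"
    and x v :: "nat \<Rightarrow> real \<Rightarrow> real^'d"
  assumes N: "N \<ge> 1"
    and lam: "lam > 0" and tau: "\<tau> > 0" and small: "lam * \<tau> \<le> 1/2"
    and psi_pos: "\<And>r. r \<ge> 0 \<Longrightarrow> \<psi> r > 0"
    and psi_le1: "\<And>r. r \<ge> 0 \<Longrightarrow> \<psi> r \<le> 1"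
    and psi_noninc: "\<And>r s. 0 \<le> r \<Longrightarrow> r \<le> s \<Longrightarrow> \<psi> s \<le> \<psi> r"
    and psi_diff: "\<And>r. r \<ge> 0 \<Longrightarrow> \<psi> differentiable (at r within {0..})"
    and x_cont: "\<And>i. i < N \<Longrightarrow> continuous_on {-\<tau>..} (x i)"
    and v_cont: "\<And>i. i < N \<Longrightarrow> continuous_on {-\<tau>..} (v i)"
    and init_C1: "\<And>i. i < N \<Longrightarrow>
       (\<forall>t\<in>{-\<tau><..<0}. x i differentiable (at t) \<and> v i differentiable (at t))
       \<and> continuous_on {-\<tau><..<0} (\<lambda>t. vector_derivative (x i) (at t))
       \<and> continuous_on {-\<tau><..<0} (\<lambda>t. vector_derivative (v i) (at t))"
    and ode_x: "\<And>i t. i < N \<Longrightarrow> t > 0 \<Longrightarrow> (x i has_vector_derivative v i t) (at t)"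
    and ode_v: "\<And>i t. i < N \<Longrightarrow> t > 0 \<Longrightarrow>
       (v i has_vector_derivative
          (lam / real N) *\<^sub>R (\<Sum>j<N. \<psi> (norm (x i (t - \<tau>) - x j (t - \<tau>)))
                                  *\<^sub>R (v j (t - \<tau>) - v i (t - \<tau>)))) (at t)"
    and t: "t \<ge> \<tau>"
  shows "Lfun N lam \<tau> \<psi> x v t \<le> Lfun N lam \<tau> \<psi> x v \<tau>"
proof -
  interpret delayed_cucker_smale N lam \<tau> \<psi> x v
  proof
    show "continuous_on {0..} \<psi>"
      using psi_diff by (intro differentiable_imp_continuous_on) (simp add: differentiable_on_def)
    show "0 \<le> \<psi> r \<and> \<psi> r \<le> 1" if "r \<ge> 0" for r
      using psi_pos[OF that] psi_le1[OF that] by simp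
  qed (use N lam tau x_cont v_cont ode_v in auto)
  show ?thesis
    using Lfun_decreasing[OF small t] .
qed

end
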